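(* The homomorphism $\mathcal{B}_{-1}:B_{2n+1}\to Sp(2n,\mathbb{R})$ lifts to a homomorphism $\widetilde{\mathcal{B}}_{-1}:B_{2n+1}\to\widetilde{Sp}(2n,\mathbb{R})$, i.e. there is a homomorphism $\widetilde{\mathcal{B}}_{-1}$ with $p\circ\widetilde{\mathcal{B}}_{-1}=\mathcal{B}_{-1}$, where $p:\widetilde{Sp}(2n,\mathbb{R})\to Sp(2n,\mathbb{R})$ is the universal covering map.
   Context: $B_{2n+1}$ is the braid group on $2n+1$ strands with standard generators $\sigma_1,\dots,\sigma_{2n}$. Let $\Sigma_n$ be the double cover of the disk branched at $2n+1$ points (a genus $n$ surface with one boundary component); $B_{2n+1}$ acts on $\Sigma_n$ with $\sigma_i$ lifting to a positive Dehn twist about a nonseparating simple closed curve $C_i$, the $C_i$ forming a chain. $\mathcal{B}_{-1}$ is the induced action on $H_1(\Sigma_n,\partial\Sigma_n;\mathbb{R})\cong\mathbb{R}^{2n}$, which preserves the intersection pairing $\omega$ (a symplectic form), so $\mathcal{B}_{-1}$ takes values in $Sp(2n,\mathbb{R})$ (this is the Burau representation at $-1$). Concretely, orienting the $C_i$ so that $\omega(C_i,C_j)=\delta_{i+1,j}-\delta_{i-1,j}$, $\mathcal{B}_{-1}(\sigma_i)(x)=x+\omega(C_i,x)C_i$. $\widetilde{Sp}(2n,\mathbb{R})$ is the universal cover, viewed as homotopy classes rel endpoints of paths in $Sp(2n,\mathbb{R})$ starting at the identity. *)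

theory Defs
  imports "HOL-Analysis.Analysis"
begin

text \<open>Real d x d matrices, represented as functions nat => nat => real that vanish
  outside the index box {0..<d} x {0..<d}; they carry the product topology
  (which, on such matrices, is the usual Euclidean topology).
  Here d = 2n and index i (0-based) corresponds to the curve C_(i+1).\<close>

type_synonym mat = "nat \<Rightarrow> nat \<Rightarrow> real"

definition mat_mul :: "nat \<Rightarrow> mat \<Rightarrow> mat \<Rightarrow> mat" where
  "mat_mul d A B = (\<lambda>i j. if i < d \<and> j < d then (\<Sum>k<d. A i k * B k j) else 0)"

definition mat_id :: "nat \<Rightarrow> mat" where
  "mat_id d = (\<lambda>i j. if i < d \<and> j = i then 1 else 0)"

definition mat_transpose :: "mat \<Rightarrow> mat" where
  "mat_transpose A = (\<lambda>i j. A j i)"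

text \<open>Gram matrix of the intersection form in the basis C_1..C_d:
  omega(C_i, C_j) = delta(i+1,j) - delta(i-1,j).\<close>

definition omega :: "nat \<Rightarrow> mat" where
  "omega d = (\<lambda>i j. if i < d \<and> j < d then
      (if j = i + 1 then 1 else if i = j + 1 then -1 else 0) else 0)"

definition Sp :: "nat \<Rightarrow> mat set" where
  "Sp d = {M. (\<forall>i j. (d \<le> i \<or> d \<le> j) \<longrightarrow> M i j = 0) \<and>
              mat_mul d (mat_transpose M) (mat_mul d (omega d) M) = omega d}"

text \<open>Matrix (in the basis C_1..C_d) of B_{-1}(sigma_(i+1)) : x |-> x + omega(C_i,x) C_i,
  and of its inverse x |-> x - omega(C_i,x) C_i.\<close>

definition burau_gen :: "nat \<Rightarrow> nat \<Rightarrow> bool \<Rightarrow> mat" where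
  "burau_gen d i pos = (\<lambda>k j. mat_id d k j +
      (if k = i then (if pos then 1 else -1) * omega d i j else 0))"

text \<open>Braid words: a letter (i, True) is sigma_(i+1), (i, False) is its inverse.
  The braid group B_(d+1) is the set of words with all indices < d modulo the
  congruence braid_eq d generated by free cancellation and the braid relations.\<close>

type_synonym braid_word = "(nat \<times> bool) list"

definition braid_word :: "nat \<Rightarrow> braid_word \<Rightarrow> bool" where
  "braid_word d w \<longleftrightarrow> (\<forall>x\<in>set w. fst x < d)"

inductive braid_eq :: "nat \<Rightarrow> braid_word \<Rightarrow> braid_word \<Rightarrow> bool" for d where
  refl: "braid_eq d w w"
| sym: "braid_eq d u v \<Longrightarrow> braid_eq d v u"
| trans: "braid_eq d u v \<Longrightarrow> braid_eq d v w \<Longrightarrow> braid_eq d u w"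
| ctxt: "braid_eq d u v \<Longrightarrow> braid_eq d (a @ u @ b) (a @ v @ b)"
| cancel: "i < d \<Longrightarrow> braid_eq d [(i, b), (i, \<not> b)] []"
| far_comm: "i < d \<Longrightarrow> j < d \<Longrightarrow> i + 1 < j \<Longrightarrow>
      braid_eq d [(i, True), (j, True)] [(j, True), (i, True)]"
| braid: "i + 1 < d \<Longrightarrow>
      braid_eq d [(i, True), (i + 1, True), (i, True)] [(i + 1, True), (i, True), (i + 1, True)]"

fun burau_word :: "nat \<Rightarrow> braid_word \<Rightarrow> mat" where
  "burau_word d [] = mat_id d"
| "burau_word d (x # w) = mat_mul d (burau_gen d (fst x) (snd x)) (burau_word d w)"

text \<open>Universal cover of Sp(d,R): homotopy classes rel endpoints (homotopic_paths (Sp d))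
  of paths in Sp(d,R) starting at the identity; the group law is pointwise product of
  paths, and the covering map p sends a class to the endpoint of the path.\<close>

definition sp_path :: "nat \<Rightarrow> (real \<Rightarrow> mat) \<Rightarrow> bool" where
  "sp_path d g \<longleftrightarrow> path g \<and> path_image g \<subseteq> Sp d \<and> pathstart g = mat_id d"

definition sp_path_mul :: "nat \<Rightarrow> (real \<Rightarrow> mat) \<Rightarrow> (real \<Rightarrow> mat) \<Rightarrow> (real \<Rightarrow> mat)" where
  "sp_path_mul d g h = (\<lambda>t. mat_mul d (g t) (h t))"

end

(* The generator sigma_(i+1)^(+-1) is sent to the path t |-> T_i(+-t) of symplectic
   transvections x |-> x +- t omega(C_i, x) C_i, which ends at B_{-1}(sigma_(i+1)^(+-1)), and
   a braid word to the pointwise product of these paths, so that concatenation of words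
   becomes pointwise multiplication of paths on the nose.  Free cancellation and far
   commutativity hold exactly along the paths: transvections along one curve form a
   one-parameter group, and transvections along disjoint curves commute.  The braid relation
   holds only up to homotopy.  The product T_a(x) T_(a+1)(y) T_a(x) only depends on
   x (2 - x y), y and x y, so moving (x, y) from (t, t) to (t / (2 - t^2), t (2 - t^2)) along
   the curve x y = t^2 deforms it, with fixed endpoints, into T_(a+1)(t) T_a(t) T_(a+1)(t). *)

theory Submission
  imports Defs
begin

section \<open>Matrix algebra\<close>

definition square_mat :: "nat \<Rightarrow> mat \<Rightarrow> bool" where
  "square_mat d M \<longleftrightarrow> (\<forall>i j. (d \<le> i \<or> d \<le> j) \<longrightarrow> M i j = 0)"

lemma square_mat_mat_mul [simp]: "square_mat d (mat_mul d A B)"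
  by (simp add: square_mat_def mat_mul_def)

lemma square_mat_mat_id [simp]: "square_mat d (mat_id d)"
  by (simp add: square_mat_def mat_id_def)

lemma square_mat_omega [simp]: "square_mat d (omega d)"
  by (simp add: square_mat_def omega_def)

lemma omega_out_of_range: "d \<le> i \<or> d \<le> j \<Longrightarrow> omega d i j = 0"
  by (auto simp: omega_def)

lemma omega_diag [simp]: "omega d i i = 0"
  by (simp add: omega_def)

lemma omega_Suc [simp]:
  "Suc a < d \<Longrightarrow> omega d a (Suc a) = 1"
  "Suc a < d \<Longrightarrow> omega d (Suc a) a = -1"
  by (auto simp: omega_def)

lemma omega_antisym: "omega d j i = - omega d i j"
  by (auto simp: omega_def)

lemma sum_mat_id_mult: "(\<Sum>l<d. mat_id d l j * f l) = (if j < d then f j else 0)"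
  for f :: "nat \<Rightarrow> real"
  by (simp add: mat_id_def if_distrib[of "\<lambda>x. x * _"] sum.delta' cong: if_cong)

lemma sum_mult_mat_id: "(\<Sum>l<d. f l * mat_id d l j) = (if j < d then f j else 0)"
  for f :: "nat \<Rightarrow> real"
  using sum_mat_id_mult[of d j f] by (simp add: mult.commute)

lemma mat_mul_assoc: "mat_mul d (mat_mul d A B) C = mat_mul d A (mat_mul d B C)"
proof (intro ext)
  fix i j
  show "mat_mul d (mat_mul d A B) C i j = mat_mul d A (mat_mul d B C) i j"
  proof (cases "i < d \<and> j < d")
    case True
    have "(\<Sum>k<d. (\<Sum>l<d. A i l * B l k) * C k j) = (\<Sum>k<d. \<Sum>l<d. A i l * B l k * C k j)"
      by (simp add: sum_distrib_right)
    also have "\<dots> = (\<Sum>l<d. \<Sum>k<d. A i l * B l k * C k j)"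
      by (rule sum.swap)
    also have "\<dots> = (\<Sum>l<d. A i l * (\<Sum>k<d. B l k * C k j))"
      by (simp add: sum_distrib_left mult.assoc)
    finally show ?thesis
      using True by (simp add: mat_mul_def)
  qed (auto simp: mat_mul_def)
qed

lemma mat_mul_id_left: "square_mat d M \<Longrightarrow> mat_mul d (mat_id d) M = M"
  by (auto simp: mat_mul_def square_mat_def mat_id_def if_distrib[of "\<lambda>x. x * _"]
      cong: if_cong intro!: ext)

lemma mat_mul_id_right: "square_mat d M \<Longrightarrow> mat_mul d M (mat_id d) = M"
  by (auto simp: mat_mul_def square_mat_def sum_mult_mat_id intro!: ext)

lemma mat_transpose_mat_mul:
  "mat_transpose (mat_mul d A B) = mat_mul d (mat_transpose B) (mat_transpose A)"
  by (auto simp: mat_mul_def mat_transpose_def mult.commute intro!: ext)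

lemma mat_transpose_mat_id: "mat_transpose (mat_id d) = mat_id d"
  by (auto simp: mat_transpose_def mat_id_def intro!: ext)

lemma Sp_iff: "M \<in> Sp d \<longleftrightarrow>
    square_mat d M \<and> mat_mul d (mat_transpose M) (mat_mul d (omega d) M) = omega d"
  by (simp add: Sp_def square_mat_def)

lemma Sp_mat_id: "mat_id d \<in> Sp d"
  by (simp add: Sp_iff mat_transpose_mat_id mat_mul_id_left mat_mul_id_right)

lemma Sp_mat_mul:
  assumes "A \<in> Sp d" "B \<in> Sp d"
  shows "mat_mul d A B \<in> Sp d"
proof -
  let ?tr = mat_transpose and ?mul = "mat_mul d"
  have A: "?mul (?tr A) (?mul (omega d) A) = omega d"
    and B: "?mul (?tr B) (?mul (omega d) B) = omega d"
    using assms by (auto simp: Sp_iff)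
  have "?mul (?tr (?mul A B)) (?mul (omega d) (?mul A B))
      = ?mul (?tr B) (?mul (?mul (?tr A) (?mul (omega d) A)) B)"
    by (simp add: mat_transpose_mat_mul mat_mul_assoc)
  also have "\<dots> = omega d"
    using A B by simp
  finally show ?thesis
    by (simp add: Sp_iff)
qed

section \<open>Symplectic transvections\<close>

definition transvection :: "nat \<Rightarrow> nat \<Rightarrow> real \<Rightarrow> mat" where
  "transvection d i x = (\<lambda>k j. mat_id d k j + (if k = i then x * omega d i j else 0))"

lemma square_mat_transvection [simp]: "square_mat d (transvection d i x)"
  by (auto simp: square_mat_def transvection_def mat_id_def omega_def)

lemma transvection_zero: "transvection d i 0 = mat_id d"
  by (auto simp: transvection_def intro!: ext)

lemma burau_gen_eq_transvection: "burau_gen d i b = transvection d i (if b then 1 else -1)"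
  by (auto simp: burau_gen_def transvection_def intro!: ext)

lemma mat_mul_transvection:
  assumes "square_mat d M"
  shows "mat_mul d (transvection d i x) M =
    (\<lambda>k j. M k j + (if k = i then x * (\<Sum>l<d. omega d i l * M l j) else 0))"
proof (intro ext)
  fix k j
  show "mat_mul d (transvection d i x) M k j =
      M k j + (if k = i then x * (\<Sum>l<d. omega d i l * M l j) else 0)"
  proof (cases "k < d \<and> j < d")
    case True
    have "(\<Sum>l<d. transvection d i x k l * M l j)
        = (\<Sum>l<d. mat_id d k l * M l j) + (if k = i then x * (\<Sum>l<d. omega d i l * M l j) else 0)"
      by (simp add: transvection_def algebra_simps sum.distrib sum_distrib_left)
    also have "(\<Sum>l<d. mat_id d k l * M l j) = M k j"
      using True by (simp add: mat_id_def if_distrib[of "\<lambda>x. x * _"] cong: if_cong)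
    finally show ?thesis
      using True by (simp add: mat_mul_def)
  qed (use assms in \<open>auto simp: mat_mul_def square_mat_def omega_out_of_range\<close>)
qed

lemma omega_row_transvection:
  "(\<Sum>l<d. omega d i l * transvection d j y l k) = omega d i k + y * omega d i j * omega d j k"
proof -
  have "(\<Sum>l<d. omega d i l * transvection d j y l k)
      = (\<Sum>l<d. omega d i l * mat_id d l k) + (if j < d then y * omega d i j * omega d j k else 0)"
    by (simp add: transvection_def distrib_left sum.distrib if_distrib[of "\<lambda>x. _ * x"]
        cong: if_cong)
  then show ?thesis
    by (auto simp: sum_mult_mat_id omega_out_of_range)
qed

lemma transvection_mul_transvection:
  "mat_mul d (transvection d i x) (transvection d j y) = (\<lambda>k l. mat_id d k l
      + (if k = j then y * omega d j l else 0)
      + (if k = i then x * (omega d i l + y * omega d i j * omega d j l) else 0))"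
  unfolding mat_mul_transvection[OF square_mat_transvection] omega_row_transvection
  by (simp add: transvection_def)

lemma transvection_add:
  "mat_mul d (transvection d i x) (transvection d i y) = transvection d i (x + y)"
  unfolding transvection_mul_transvection by (auto simp: transvection_def algebra_simps intro!: ext)

lemma transvection_commute:
  assumes "i + 1 < j"
  shows "mat_mul d (transvection d i x) (transvection d j y)
       = mat_mul d (transvection d j y) (transvection d i x)"
proof -
  have "omega d i j = 0" "omega d j i = 0"
    using assms by (auto simp: omega_def)
  then show ?thesis
    unfolding transvection_mul_transvection by (auto intro!: ext)
qed

lemma transvection_in_Sp: "transvection d i x \<in> Sp d"
proof -
  define P where "P = (\<lambda>k j. omega d k j + x * omega d k i * omega d i j)"
  have omega_T: "mat_mul d (omega d) (transvection d i x) = P"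
    by (auto simp: mat_mul_def P_def omega_row_transvection omega_out_of_range intro!: ext)
  have "(\<Sum>l<d. transvection d i x l k * P l j) = P k j + x * omega d i k * omega d i j"
    if "k < d" for k j
    using that
    by (auto simp: transvection_def P_def distrib_right sum.distrib sum_mat_id_mult
        omega_out_of_range if_distrib[of "\<lambda>x. x * _"] cong: if_cong)
  then have "mat_mul d (mat_transpose (transvection d i x)) P = omega d"
    by (auto simp: mat_mul_def mat_transpose_def P_def omega_out_of_range
        omega_antisym[of d i] intro!: ext)
  with omega_T show ?thesis
    by (simp add: Sp_iff)
qed

text \<open>Products of transvections along the adjacent curves C_(a+1), C_(a+2) stay in this
  four-parameter family.\<close>

definition pair_shear :: "nat \<Rightarrow> nat \<Rightarrow> real \<Rightarrow> real \<Rightarrow> real \<Rightarrow> real \<Rightarrow> mat" where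
  "pair_shear d a \<alpha> \<beta> \<gamma> \<delta> = (\<lambda>k j. mat_id d k j
      + (if k = a then \<alpha> * omega d a j + \<gamma> * omega d (Suc a) j else 0)
      + (if k = Suc a then \<beta> * omega d (Suc a) j + \<delta> * omega d a j else 0))"

lemma square_mat_pair_shear: "Suc a < d \<Longrightarrow> square_mat d (pair_shear d a \<alpha> \<beta> \<gamma> \<delta>)"
  by (auto simp: square_mat_def pair_shear_def mat_id_def omega_out_of_range)

lemma transvection_eq_pair_shear_fst: "transvection d a x = pair_shear d a x 0 0 0"
  by (auto simp: transvection_def pair_shear_def intro!: ext)

lemma transvection_eq_pair_shear_snd: "transvection d (Suc a) y = pair_shear d a 0 y 0 0"
  by (auto simp: transvection_def pair_shear_def intro!: ext)

lemma omega_row_pair_shear: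
  assumes "Suc a < d"
  shows "(\<Sum>l<d. omega d i l * pair_shear d a \<alpha> \<beta> \<gamma> \<delta> l j) = omega d i j
    + omega d i a * (\<alpha> * omega d a j + \<gamma> * omega d (Suc a) j)
    + omega d i (Suc a) * (\<beta> * omega d (Suc a) j + \<delta> * omega d a j)"
  using assms
  by (auto simp: pair_shear_def distrib_left sum.distrib sum_mult_mat_id omega_out_of_range
      if_distrib[of "\<lambda>x. _ * x"] cong: if_cong)

lemma transvection_mul_pair_shear_fst:
  assumes "Suc a < d"
  shows "mat_mul d (transvection d a x) (pair_shear d a \<alpha> \<beta> \<gamma> \<delta>)
       = pair_shear d a (\<alpha> + x * (1 + \<delta>)) \<beta> (\<gamma> + x * \<beta>) \<delta>"
  unfolding mat_mul_transvection[OF square_mat_pair_shear[OF assms]] omega_row_pair_shear[OF assms]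
  using assms by (auto simp: pair_shear_def algebra_simps intro!: ext)

lemma transvection_mul_pair_shear_snd:
  assumes "Suc a < d"
  shows "mat_mul d (transvection d (Suc a) y) (pair_shear d a \<alpha> \<beta> \<gamma> \<delta>)
       = pair_shear d a \<alpha> (\<beta> + y * (1 - \<gamma>)) \<gamma> (\<delta> - y * \<alpha>)"
  unfolding mat_mul_transvection[OF square_mat_pair_shear[OF assms]] omega_row_pair_shear[OF assms]
  using assms by (auto simp: pair_shear_def algebra_simps intro!: ext)

lemma transvection_triple_eq_pair_shear_fst:
  assumes "Suc a < d"
  shows "mat_mul d (transvection d a x) (mat_mul d (transvection d (Suc a) y) (transvection d a x))
       = pair_shear d a (x * (2 - x * y)) y (x * y) (- (x * y))"
proof -
  have "mat_mul d (transvection d a x)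
          (mat_mul d (transvection d (Suc a) y) (pair_shear d a x 0 0 0))
      = pair_shear d a (x * (2 - x * y)) y (x * y) (- (x * y))"
    using assms by (simp add: transvection_mul_pair_shear_fst transvection_mul_pair_shear_snd
        algebra_simps)
  then show ?thesis
    by (simp only: transvection_eq_pair_shear_fst[symmetric])
qed

lemma transvection_triple_eq_pair_shear_snd:
  assumes "Suc a < d"
  shows "mat_mul d (transvection d (Suc a) y)
           (mat_mul d (transvection d a x) (transvection d (Suc a) y))
       = pair_shear d a x (y * (2 - x * y)) (x * y) (- (x * y))"
proof -
  have "mat_mul d (transvection d (Suc a) y)
          (mat_mul d (transvection d a x) (pair_shear d a 0 y 0 0))
      = pair_shear d a x (y * (2 - x * y)) (x * y) (- (x * y))"
    using assms by (simp add: transvection_mul_pair_shear_fst transvection_mul_pair_shear_snd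
        algebra_simps)
  then show ?thesis
    by (simp only: transvection_eq_pair_shear_snd[symmetric])
qed

lemma transvection_braid_identity:
  assumes "Suc a < d"
    and "x * y = x' * y'" "x' = x * (2 - x * y)" "y = y' * (2 - x' * y')"
  shows "mat_mul d (transvection d a x) (mat_mul d (transvection d (Suc a) y) (transvection d a x))
       = mat_mul d (transvection d (Suc a) y')
           (mat_mul d (transvection d a x') (transvection d (Suc a) y'))"
proof -
  have "pair_shear d a (x * (2 - x * y)) y (x * y) (- (x * y))
      = pair_shear d a x' (y' * (2 - x' * y')) (x' * y') (- (x' * y'))"
    using assms(2-4) by metis
  with assms(1) show ?thesis
    by (simp only: transvection_triple_eq_pair_shear_fst transvection_triple_eq_pair_shear_snd)
qed

section \<open>Paths of transvections attached to braid words\<close>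

fun braid_path :: "nat \<Rightarrow> braid_word \<Rightarrow> real \<Rightarrow> mat" where
  "braid_path d [] t = mat_id d"
| "braid_path d ((i, b) # w) t =
    mat_mul d (transvection d i (if b then t else - t)) (braid_path d w t)"

lemma braid_path_zero: "braid_path d w 0 = mat_id d"
  by (induction d w "0::real" rule: braid_path.induct)
    (auto simp: transvection_zero mat_mul_id_left)

lemma braid_path_one: "braid_path d w 1 = burau_word d w"
  by (induction d w "1::real" rule: braid_path.induct) (auto simp: burau_gen_eq_transvection)

lemma braid_path_in_Sp: "braid_path d w t \<in> Sp d"
  by (induction d w t rule: braid_path.induct)
    (auto simp: Sp_mat_id Sp_mat_mul transvection_in_Sp)

lemma braid_path_append: "braid_path d (u @ v) t = mat_mul d (braid_path d u t) (braid_path d v t)"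
  by (induction d u t rule: braid_path.induct)
    (auto simp: mat_mul_id_left mat_mul_assoc braid_path_in_Sp[unfolded Sp_iff])

lemma continuous_on_mat_entrywise:
  "(\<And>i j. continuous_on S (\<lambda>x. (f x :: mat) i j)) \<Longrightarrow> continuous_on S f"
  by (intro continuous_on_coordinatewise_then_product)

lemma continuous_on_mat_mul:
  assumes "continuous_on S f" "continuous_on S g"
  shows "continuous_on S (\<lambda>x. mat_mul d (f x) (g x))"
proof -
  have "continuous_on S (\<lambda>x. f x i k)" "continuous_on S (\<lambda>x. g x k j)" for i j k
    using assms by (auto intro: continuous_on_product_then_coordinatewise)
  then have "continuous_on S (\<lambda>x. mat_mul d (f x) (g x) i j)" for i j
    by (cases "i < d \<and> j < d") (auto simp: mat_mul_def intro!: continuous_intros)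
  then show ?thesis
    by (rule continuous_on_mat_entrywise)
qed

lemma continuous_on_transvection:
  assumes "continuous_on S c"
  shows "continuous_on S (\<lambda>s. transvection d i (c s))"
proof -
  have "continuous_on S (\<lambda>s. transvection d i (c s) k j)" for k j
    using assms by (cases "k = i") (auto simp: transvection_def intro!: continuous_intros)
  then show ?thesis
    by (rule continuous_on_mat_entrywise)
qed

lemma continuous_on_braid_path: "continuous_on S (braid_path d w)"
proof (induction w)
  case (Cons x w)
  then show ?case
  proof (cases x)
    case (Pair i b)
    have "continuous_on S (\<lambda>t. if b then t else - t)"
      by (cases b) (auto intro: continuous_intros)
    with Pair Cons.IH show ?thesis
      by (auto intro!: continuous_on_mat_mul continuous_on_transvection)
  qed
qed (simp add: continuous_on_const)

lemma path_braid_path: "path (braid_path d w)"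
  by (simp add: path_def continuous_on_braid_path)

lemma path_image_braid_path: "path_image (braid_path d w) \<subseteq> Sp d"
  by (auto simp: path_image_def braid_path_in_Sp)

lemma homotopic_braid_path_refl: "homotopic_paths (Sp d) (braid_path d w) (braid_path d w)"
  by (simp add: path_braid_path path_image_braid_path)

lemma homotopic_paths_mat_mul_context:
  assumes "homotopic_paths (Sp d) p q"
    and f: "continuous_on {0..1} f" "\<And>t. f t \<in> Sp d"
    and g: "continuous_on {0..1} g" "\<And>t. g t \<in> Sp d"
  shows "homotopic_paths (Sp d) (\<lambda>t. mat_mul d (f t) (mat_mul d (p t) (g t)))
                                (\<lambda>t. mat_mul d (f t) (mat_mul d (q t) (g t)))"
proof -
  obtain h where h: "continuous_on ({0..1} \<times> {0..1}) h" "h \<in> {0..1} \<times> {0..1} \<rightarrow> Sp d"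
    and h0: "\<forall>t \<in> {0..1}. h (0, t) = p t" and h1: "\<forall>t \<in> {0..1}. h (1, t) = q t"
    and ends: "\<forall>s \<in> {0..1::real}. pathstart (h \<circ> Pair s) = pathstart p \<and>
                                   pathfinish (h \<circ> Pair s) = pathfinish p"
    using assms(1) unfolding homotopic_paths by blast
  define h' where "h' z = mat_mul d (f (snd z)) (mat_mul d (h z) (g (snd z)))" for z
  have "continuous_on ({0..1} \<times> {0..1}) (\<lambda>z. f (snd z))"
    "continuous_on ({0..1} \<times> {0..1}) (\<lambda>z. g (snd z))"
    by (auto intro!: continuous_on_compose2[OF f(1) continuous_on_snd]
        continuous_on_compose2[OF g(1) continuous_on_snd])
  with h(1) have "continuous_on ({0..1} \<times> {0..1}) h'"
    unfolding h'_def by (intro continuous_on_mat_mul)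
  moreover have "h' \<in> {0..1} \<times> {0..1} \<rightarrow> Sp d"
    using h(2) f(2) g(2) by (auto simp: h'_def Pi_iff intro!: Sp_mat_mul)
  ultimately show ?thesis
    unfolding homotopic_paths using h0 h1 ends
    by (intro exI[of _ h']) (auto simp: h'_def pathstart_def pathfinish_def)
qed

lemma homotopic_braid_path_braid_relation:
  assumes a: "Suc a < d"
  shows "homotopic_paths (Sp d) (braid_path d [(a, True), (Suc a, True), (a, True)])
                                (braid_path d [(Suc a, True), (a, True), (Suc a, True)])"
proof -
  txt \<open>Writing z = (s, t), the product of the two transvection parameters stays t^2,
    and at s = 1 the braid identity applies.\<close>
  define m where "m z = 1 + fst z * (1 - snd z ^ 2)" for z :: "real \<times> real"
  define h where "h z = mat_mul d (transvection d a (snd z / m z))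
      (mat_mul d (transvection d (Suc a) (snd z * m z)) (transvection d a (snd z / m z)))" for z
  let ?I = "{0..1::real}"
  have m_nonzero: "m z \<noteq> 0" if "z \<in> ?I \<times> ?I" for z
  proof -
    have "snd z ^ 2 \<le> 1"
      using that by (auto simp: power_le_one)
    with that have "m z > 0"
      by (auto simp: m_def intro: add_pos_nonneg)
    then show ?thesis
      by simp
  qed
  have "continuous_on (?I \<times> ?I) m"
    unfolding m_def by (intro continuous_intros)
  with m_nonzero have "continuous_on (?I \<times> ?I) h"
    unfolding h_def
    by (intro continuous_on_mat_mul continuous_on_transvection) (auto intro!: continuous_intros)
  moreover have "h \<in> ?I \<times> ?I \<rightarrow> Sp d"
    by (auto simp: h_def intro!: Sp_mat_mul transvection_in_Sp)
  moreover have "h (0, t) = braid_path d [(a, True), (Suc a, True), (a, True)] t" for t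
    by (simp add: h_def m_def mat_mul_id_right)
  moreover have "h (1, t) = braid_path d [(Suc a, True), (a, True), (Suc a, True)] t"
    if "t \<in> ?I" for t
  proof -
    have c: "t * t \<noteq> 2"
      using that mult_le_one[of t t] by auto
    then have xy: "t / (2 - t * t) * (t * (2 - t * t)) = t * t"
      by simp
    have "h (1, t) = mat_mul d (transvection d (Suc a) t)
        (mat_mul d (transvection d a t) (transvection d (Suc a) t))"
      unfolding h_def m_def
      by (intro transvection_braid_identity[OF a]) (simp_all add: xy c power2_eq_square)
    then show ?thesis
      by (simp add: mat_mul_id_right)
  qed
  moreover have "h (s, t) = braid_path d [(a, True), (Suc a, True), (a, True)] t"
    if "t = 0 \<or> t = 1" for s t
    using that by (auto simp: h_def m_def transvection_zero mat_mul_id_right)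
  ultimately show ?thesis
    unfolding homotopic_paths by (intro exI[of _ h]) (auto simp: pathstart_def pathfinish_def)
qed

lemma homotopic_braid_path_braid_eq:
  "braid_eq d u v \<Longrightarrow> homotopic_paths (Sp d) (braid_path d u) (braid_path d v)"
proof (induction rule: braid_eq.induct)
  case (refl w)
  show ?case
    by (rule homotopic_braid_path_refl)
next
  case (sym u v)
  from sym.IH show ?case
    by (rule homotopic_paths_sym)
next
  case (trans u v w)
  from trans.IH show ?case
    by (rule homotopic_paths_trans)
next
  case (ctxt u v l r)
  have "braid_path d (l @ w @ r)
      = (\<lambda>t. mat_mul d (braid_path d l t) (mat_mul d (braid_path d w t) (braid_path d r t)))"
    for w
    by (rule ext) (simp add: braid_path_append)
  with ctxt.IH show ?case
    by (simp add: homotopic_paths_mat_mul_context continuous_on_braid_path braid_path_in_Sp)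
next
  case (cancel i b)
  then have "braid_path d [(i, b), (i, \<not> b)] = braid_path d []"
    by (auto simp: mat_mul_id_right transvection_add transvection_zero)
  then show ?case
    by (metis homotopic_braid_path_refl)
next
  case (far_comm i j)
  then have "braid_path d [(i, True), (j, True)] = braid_path d [(j, True), (i, True)]"
    by (auto simp: transvection_commute[OF far_comm.hyps(3)] mat_mul_id_right intro!: ext)
  then show ?case
    by (metis homotopic_braid_path_refl)
next
  case (braid i)
  with homotopic_braid_path_braid_relation[of i d] show ?case
    by (simp only: Suc_eq_plus1)
qed

theorem lemma3p3:
  fixes n :: nat
  shows "\<exists>F :: braid_word \<Rightarrow> (real \<Rightarrow> mat).
     (\<forall>w. braid_word (2*n) w \<longrightarrow>
          sp_path (2*n) (F w) \<and> pathfinish (F w) = burau_word (2*n) w) \<and>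
     (\<forall>u v. braid_word (2*n) u \<longrightarrow> braid_word (2*n) v \<longrightarrow> braid_eq (2*n) u v \<longrightarrow>
          homotopic_paths (Sp (2*n)) (F u) (F v)) \<and>
     (\<forall>u v. braid_word (2*n) u \<longrightarrow> braid_word (2*n) v \<longrightarrow>
          homotopic_paths (Sp (2*n)) (F (u @ v)) (sp_path_mul (2*n) (F u) (F v)))"
proof (intro exI[of _ "braid_path (2*n)"] conjI allI impI)
  fix w
  show "sp_path (2*n) (braid_path (2*n) w)"
    by (simp add: sp_path_def path_braid_path path_image_braid_path pathstart_def braid_path_zero)
  show "pathfinish (braid_path (2*n) w) = burau_word (2*n) w"
    by (simp add: pathfinish_def braid_path_one)
next
  fix u v
  show "braid_eq (2*n) u v \<Longrightarrow> homotopic_paths (Sp (2*n)) (braid_path (2*n) u) (braid_path (2*n) v)"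
    by (rule homotopic_braid_path_braid_eq)
  have "braid_path (2*n) (u @ v) = sp_path_mul (2*n) (braid_path (2*n) u) (braid_path (2*n) v)"
    by (auto simp: sp_path_mul_def braid_path_append)
  then show "homotopic_paths (Sp (2*n)) (braid_path (2*n) (u @ v))
      (sp_path_mul (2*n) (braid_path (2*n) u) (braid_path (2*n) v))"
    by (metis homotopic_braid_path_refl)
qed

end
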